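(* Fix a partition $\Pi$ of $V(G)$ into sets of sizes divisible by $r$. Suppose each $f_v$ is $K_v$-Lipschitz and let $K_{\max}=\max_vK_v$. If $\mathcal P$ is sampled uniformly from the set of partitions of $V(G)$ into $n$ sets of size $r$ each contained in a single part of $\Pi$, and $T=T_{\vec B,\mathcal P}$ with $\vec B$ independent of $\mathcal P$, then $$\mathbb E_{\mathcal P}\big|\mathbb E_{\vec B}(\xi\mid\mathcal P)\big|\le\frac{2K_{\max}|\Pi|}{rn}.$$
   Context: Let $n,p,q$ be positive integers, $r=p+q$, $G$ a finite simple graph with $|V(G)|=rn$ and no isolated vertices; $\mathcal N(v)$, $d(v)$ neighbor set and degree. For each $v$, $f_v:2^{\mathcal N(v)}\to\mathbb R$ with $f_v(\emptyset)=0$. $\sigma_T(v)=q$ if $v\in T$, $-p$ otherwise; for $|T|=pn$, $\xi=\frac1{pqn}\sum_v\sigma_T(v)f_v(T\cap\mathcal N(v))$. $f_v$ is $K_v$-Lipschitz ($K_v>0$) if $|f_v(A)-f_v(A')|\le K_v|A\triangle A'|/d(v)$ for all $A,A'\subseteq\mathcal N(v)$. Restricted randomization: for $\mathcal P=(S_1,\dots,S_n)$, $S_i=\{w_i^1,\dots,w_i^r\}$, $B_i$ i.i.d. uniform $p$-subsets of $\{1,\dots,r\}$, $T_{\vec B,\mathcal P}=\{w_i^j:j\in B_i\}$. *)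

theory Defs
  imports Complex_Main "HOL-Library.Disjoint_Sets" "HOL-Library.FuncSet"
begin

definition nbrs :: "('a \<Rightarrow> 'a \<Rightarrow> bool) \<Rightarrow> 'a set \<Rightarrow> 'a \<Rightarrow> 'a set" where
  "nbrs E V v = {u \<in> V. E v u}"

definition deg :: "('a \<Rightarrow> 'a \<Rightarrow> bool) \<Rightarrow> 'a set \<Rightarrow> 'a \<Rightarrow> nat" where
  "deg E V v = card (nbrs E V v)"

definition simple_graph_no_isolated :: "('a \<Rightarrow> 'a \<Rightarrow> bool) \<Rightarrow> 'a set \<Rightarrow> bool" where
  "simple_graph_no_isolated E V \<longleftrightarrow> finite V \<and>
     (\<forall>u\<in>V. \<forall>v\<in>V. E u v \<longleftrightarrow> E v u) \<and> (\<forall>v\<in>V. \<not> E v v) \<and>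
     (\<forall>v\<in>V. \<exists>u\<in>V. E v u)"

definition sigma :: "nat \<Rightarrow> nat \<Rightarrow> 'a set \<Rightarrow> 'a \<Rightarrow> real" where
  "sigma p q T v = (if v \<in> T then real q else - real p)"

definition xi :: "('a \<Rightarrow> 'a \<Rightarrow> bool) \<Rightarrow> 'a set \<Rightarrow> ('a \<Rightarrow> 'a set \<Rightarrow> real)
                   \<Rightarrow> nat \<Rightarrow> nat \<Rightarrow> nat \<Rightarrow> 'a set \<Rightarrow> real" where
  "xi E V f p q n T =
     (1 / (real p * real q * real n)) * (\<Sum>v\<in>V. sigma p q T v * f v (T \<inter> nbrs E V v))"

definition lipschitz_vertex :: "('a \<Rightarrow> 'a \<Rightarrow> bool) \<Rightarrow> 'a set \<Rightarrow> ('a \<Rightarrow> 'a set \<Rightarrow> real)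
                   \<Rightarrow> ('a \<Rightarrow> real) \<Rightarrow> 'a \<Rightarrow> bool" where
  "lipschitz_vertex E V f K v \<longleftrightarrow> K v > 0 \<and>
     (\<forall>A A'. A \<subseteq> nbrs E V v \<longrightarrow> A' \<subseteq> nbrs E V v \<longrightarrow>
        \<bar>f v A - f v A'\<bar> \<le> K v * real (card (sym_diff A A')) / real (deg E V v))"

definition is_partition :: "'a set \<Rightarrow> 'a set set \<Rightarrow> bool" where
  "is_partition V Parts \<longleftrightarrow> \<Union>Parts = V \<and> {} \<notin> Parts \<and> disjoint Parts"

definition restricted_partitions :: "'a set \<Rightarrow> 'a set set \<Rightarrow> nat \<Rightarrow> nat \<Rightarrow> 'a set set set" where
  "restricted_partitions V Parts r n =
     {P. is_partition V P \<and> card P = n \<and>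
         (\<forall>S\<in>P. card S = r \<and> (\<exists>A\<in>Parts. S \<subseteq> A))}"

text \<open>Conditional expectation over B given P: in every block S of P independently a uniformly
  random p-subset is chosen; T is the union of the chosen subsets (this is the law of T_{B,P}).\<close>
definition block_choices :: "'a set set \<Rightarrow> nat \<Rightarrow> ('a set \<Rightarrow> 'a set) set" where
  "block_choices P p = (\<Pi>\<^sub>E S\<in>P. {B. B \<subseteq> S \<and> card B = p})"

definition cond_exp_B :: "('a \<Rightarrow> 'a \<Rightarrow> bool) \<Rightarrow> 'a set \<Rightarrow> ('a \<Rightarrow> 'a set \<Rightarrow> real)
                   \<Rightarrow> nat \<Rightarrow> nat \<Rightarrow> nat \<Rightarrow> 'a set set \<Rightarrow> real" where
  "cond_exp_B E V f p q n P =
     (\<Sum>g\<in>block_choices P p. xi E V f p q n (\<Union>S\<in>P. g S)) / real (card (block_choices P p))"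

end

theory Submission
  imports Defs "HOL-Combinatorics.Transposition"
begin

text \<open>Fix the partition P and a vertex v in its block S. Matching every choice T with
  v \<notin> T against the choices T - {w} + {v}, w \<in> T \<inter> S, rewrites the expectation of
  \<sigma>_T(v) f_v(T \<inter> N(v)) as a sum of differences f_v(T') - f_v(T), in each of which only w
  enters or leaves N(v). By the Lipschitz condition and a count of the matched pairs,
  |E_B \<xi>| \<le> \<Sum>_v K_v |S_v \<inter> N(v)| / (d(v) n r (r - 1)).

  Averaging over P, transpositions inside a part A of \<Pi> show that each u \<in> A - {v} shares
  the block of v with probability (r - 1) / (|A| - 1), so the expected size of
  S_v \<inter> N(v) is at most d(v) (r - 1) / (|A| - 1). What remains is
  \<Sum>_v K_v / (r n (|A_v| - 1)), and each part contributes at most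
  K_max |A| / (|A| - 1) \<le> 2 K_max because |A| \<ge> r \<ge> 2.\<close>

definition block_of :: "'a set set \<Rightarrow> 'a \<Rightarrow> 'a set" where
  "block_of P v = \<Union>{S\<in>P. v \<in> S}"

lemma block_of_eq:
  assumes "disjoint P" "S \<in> P" "v \<in> S"
  shows "block_of P v = S"
proof -
  have "{S'\<in>P. v \<in> S'} = {S}"
    using assms by (auto dest: disjointD)
  thus ?thesis unfolding block_of_def by simp
qed

lemma block_of_mem:
  assumes "is_partition V P" "v \<in> V"
  shows "block_of P v \<in> P" "v \<in> block_of P v"
proof -
  obtain S where "S \<in> P" "v \<in> S" using assms unfolding is_partition_def by auto
  moreover have "block_of P v = S"
    using assms(1) calculation by (intro block_of_eq) (auto simp: is_partition_def)
  ultimately show "block_of P v \<in> P" "v \<in> block_of P v" by simp_all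
qed

lemma is_partition_finite:
  assumes "is_partition V P" "finite V"
  shows "finite P" "S \<in> P \<Longrightarrow> finite S"
proof -
  have "P \<subseteq> Pow V" using assms(1) unfolding is_partition_def by auto
  thus "finite P" using assms(2) by (rule finite_subset[OF _ finite_Pow_iff[THEN iffD2]])
  show "S \<in> P \<Longrightarrow> finite S" using \<open>P \<subseteq> Pow V\<close> assms(2) by (auto intro: finite_subset)
qed

lemma nbrs_not_self:
  "simple_graph_no_isolated E V \<Longrightarrow> v \<in> V \<Longrightarrow> v \<notin> nbrs E V v"
  unfolding simple_graph_no_isolated_def nbrs_def by auto

lemma deg_pos:
  assumes "simple_graph_no_isolated E V" "v \<in> V"
  shows "deg E V v > 0"
proof -
  obtain u where "u \<in> V" "E v u"
    using assms unfolding simple_graph_no_isolated_def by blast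
  hence "u \<in> nbrs E V v" by (simp add: nbrs_def)
  moreover have "finite (nbrs E V v)"
    using assms(1) unfolding simple_graph_no_isolated_def nbrs_def by auto
  ultimately show ?thesis unfolding deg_def by (auto simp: card_gt_0_iff)
qed

lemma block_choices_iff:
  "g \<in> block_choices P p \<longleftrightarrow> g \<in> extensional P \<and> (\<forall>S\<in>P. g S \<subseteq> S \<and> card (g S) = p)"
  unfolding block_choices_def PiE_def by auto

lemma finite_block_choices:
  "finite P \<Longrightarrow> (\<And>S. S \<in> P \<Longrightarrow> finite S) \<Longrightarrow> finite (block_choices P p)"
  unfolding block_choices_def by (intro finite_PiE) auto

lemma card_block_choices:
  assumes "finite P" "\<And>S. S \<in> P \<Longrightarrow> finite S"
  shows "card (block_choices P p) = (\<Prod>S\<in>P. card S choose p)"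
  unfolding block_choices_def card_PiE[OF assms(1)] using assms(2) by (simp add: n_subsets)

lemma mem_Union_block_choices:
  assumes "disjoint P" "S \<in> P" "v \<in> S" "g \<in> block_choices P p"
  shows "v \<in> (\<Union>S'\<in>P. g S') \<longleftrightarrow> v \<in> g S"
proof
  assume "v \<in> (\<Union>S'\<in>P. g S')"
  then obtain S' where "S' \<in> P" "v \<in> g S'" by auto
  moreover from this have "S' = S"
    using assms by (auto simp: block_choices_iff dest: disjointD)
  ultimately show "v \<in> g S" by simp
qed (use assms in auto)

lemma block_choices_exchange:
  assumes "g \<in> block_choices P p" "S \<in> P" "x \<in> g S" "y \<in> S" "y \<notin> g S" "finite S"
  shows "g(S := insert y (g S - {x})) \<in> block_choices P p"
proof -
  have "g S \<subseteq> S" "card (g S) = p" using assms(1,2) by (auto simp: block_choices_iff)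
  moreover have "finite (g S)" using calculation(1) assms(6) by (rule finite_subset)
  moreover have "p > 0" using calculation assms(3) by (auto simp: card_gt_0_iff)
  ultimately show ?thesis
    using assms by (auto simp: block_choices_iff extensional_def card_insert_if)
qed

lemma card_block_choices_restrict:
  assumes "finite P" "\<And>S. S \<in> P \<Longrightarrow> finite S" "S0 \<in> P" "X \<subseteq> {B. B \<subseteq> S0 \<and> card B = p}"
  shows "card {g\<in>block_choices P p. g S0 \<in> X} * (card S0 choose p)
       = card X * card (block_choices P p)"
proof -
  define R where "R = (\<Prod>S\<in>P - {S0}. card S choose p)"
  have "{g\<in>block_choices P p. g S0 \<in> X}
      = (\<Pi>\<^sub>E S\<in>P. if S = S0 then X else {B. B \<subseteq> S \<and> card B = p})"
  proof (intro set_eqI iffI)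
    fix g assume "g \<in> {g\<in>block_choices P p. g S0 \<in> X}"
    thus "g \<in> (\<Pi>\<^sub>E S\<in>P. if S = S0 then X else {B. B \<subseteq> S \<and> card B = p})"
      unfolding block_choices_def by (simp add: PiE_iff)
  next
    fix g assume g: "g \<in> (\<Pi>\<^sub>E S\<in>P. if S = S0 then X else {B. B \<subseteq> S \<and> card B = p})"
    hence "g S0 \<in> X" using assms(3) by (auto simp: PiE_iff)
    moreover have "g \<in> block_choices P p"
      using g assms(4) unfolding block_choices_def PiE_iff by (metis (lifting) subsetD)
    ultimately show "g \<in> {g\<in>block_choices P p. g S0 \<in> X}" by simp
  qed
  also have "card \<dots> = card X * R"
    unfolding card_PiE[OF assms(1)] R_def prod.remove[OF assms(1,3)]
    using assms(2) by (auto simp: n_subsets intro!: prod.cong)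
  finally have "card {g\<in>block_choices P p. g S0 \<in> X} = card X * R" .
  moreover have "card (block_choices P p) = (card S0 choose p) * R"
    using card_block_choices[OF assms(1,2)] prod.remove[OF assms(1,3)] by (simp add: R_def)
  ultimately show ?thesis by simp
qed

lemma card_subsets_avoiding_containing:
  assumes "finite S" "v \<in> S" "w \<in> S" "v \<noteq> w" "p > 0"
  shows "card {B. B \<subseteq> S \<and> card B = p \<and> v \<notin> B \<and> w \<in> B} = (card S - 2) choose (p - 1)"
proof -
  let ?Y = "{B. B \<subseteq> S - {v, w} \<and> card B = p - 1}"
  have "{B. B \<subseteq> S \<and> card B = p \<and> v \<notin> B \<and> w \<in> B} = insert w ` ?Y"
  proof (intro equalityI subsetI)
    fix B assume "B \<in> {B. B \<subseteq> S \<and> card B = p \<and> v \<notin> B \<and> w \<in> B}"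
    hence "B = insert w (B - {w})" "B - {w} \<in> ?Y"
      using assms(1) by (auto dest: finite_subset)
    thus "B \<in> insert w ` ?Y" by blast
  next
    fix B assume "B \<in> insert w ` ?Y"
    then obtain B' where "B' \<subseteq> S - {v, w}" "card B' = p - 1" "B = insert w B'" by auto
    moreover have "finite B'" using calculation(1) assms(1) by (auto dest: finite_subset)
    ultimately show "B \<in> {B. B \<subseteq> S \<and> card B = p \<and> v \<notin> B \<and> w \<in> B}"
      using assms by (auto simp: card_insert_if)
  qed
  moreover have "inj_on (insert w) ?Y"
    by (rule inj_onI) (metis Diff_iff insertI1 insert_Diff1 insert_absorb insert_ident mem_Collect_eq subset_iff)
  moreover have "card (S - {v, w}) = card S - 2"
    using assms by (simp add: card_Diff_subset)
  ultimately show ?thesis using assms(1) by (simp add: card_image n_subsets)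
qed

lemma binomial_absorption_twice:
  assumes "p > 0" "q > 0"
  shows "(p + q - 2 choose (p - 1)) * ((p + q) * (p + q - 1)) = (p + q choose p) * p * q"
proof -
  obtain a b where ab: "p = Suc a" "q = Suc b" using assms by (metis gr0_implies_Suc)
  have "(p + q choose p) * p = (p + q) * (p + q - 1 choose a)"
    using binomial_absorption[of a "p + q"] ab by (simp add: mult.commute)
  moreover have "(p + q - 1 choose a) * q = (p + q - 1) * (p + q - 2 choose a)"
    using binomial_absorb_comp[of "p + q - 1" a] ab by (simp add: mult.commute)
  ultimately show ?thesis using ab by (simp add: algebra_simps)
qed

lemma card_block_choices_avoiding_containing:
  assumes "finite P" "\<And>S. S \<in> P \<Longrightarrow> finite S" "S0 \<in> P" "v \<in> S0" "w \<in> S0" "v \<noteq> w"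
    and "card S0 = p + q" "p > 0" "q > 0"
  shows "card {g\<in>block_choices P p. v \<notin> g S0 \<and> w \<in> g S0} * ((p + q) * (p + q - 1))
       = card (block_choices P p) * p * q"
proof -
  let ?X = "{B. B \<subseteq> S0 \<and> card B = p \<and> v \<notin> B \<and> w \<in> B}"
  let ?c = "card {g\<in>block_choices P p. v \<notin> g S0 \<and> w \<in> g S0}"
  have "{g\<in>block_choices P p. v \<notin> g S0 \<and> w \<in> g S0} = {g\<in>block_choices P p. g S0 \<in> ?X}"
  proof (intro Collect_cong conj_cong refl)
    fix g assume "g \<in> block_choices P p"
    hence "g S0 \<subseteq> S0" "card (g S0) = p" using assms(3) by (auto simp: block_choices_iff)
    thus "(v \<notin> g S0 \<and> w \<in> g S0) = (g S0 \<in> ?X)" by simp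
  qed
  moreover have "card {g\<in>block_choices P p. g S0 \<in> ?X} * (card S0 choose p) = card ?X * card (block_choices P p)"
    by (rule card_block_choices_restrict[OF assms(1-3)]) auto
  moreover have "card ?X = p + q - 2 choose (p - 1)"
    using card_subsets_avoiding_containing[OF assms(2)[OF assms(3)] assms(4-6,8)] assms(7) by simp
  ultimately have c: "?c * (p + q choose p) = (p + q - 2 choose (p - 1)) * card (block_choices P p)"
    using assms(7) by simp
  have "?c * ((p + q) * (p + q - 1)) * (p + q choose p)
      = (?c * (p + q choose p)) * ((p + q) * (p + q - 1))"
    by (simp only: mult_ac)
  also have "\<dots> = (p + q - 2 choose (p - 1)) * card (block_choices P p) * ((p + q) * (p + q - 1))"
    by (simp only: c)
  also have "\<dots> = (p + q - 2 choose (p - 1)) * ((p + q) * (p + q - 1)) * card (block_choices P p)"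
    by (simp only: mult_ac)
  also have "\<dots> = card (block_choices P p) * p * q * (p + q choose p)"
    by (subst binomial_absorption_twice[OF assms(8,9)]) (simp only: mult_ac)
  finally show ?thesis by simp
qed

lemma sum_exchange_reindex:
  assumes "S0 \<in> P" "v \<in> S0" "finite S0"
  shows "(\<Sum>(g, w)\<in>Sigma {g\<in>block_choices P p. v \<notin> g S0} (\<lambda>g. g S0).
            F (g(S0 := insert v (g S0 - {w}))))
       = (\<Sum>(g, w)\<in>Sigma {g\<in>block_choices P p. v \<in> g S0} (\<lambda>g. S0 - g S0). F g)"
proof -
  let ?Out = "Sigma {g\<in>block_choices P p. v \<notin> g S0} (\<lambda>g. g S0)"
  let ?In = "Sigma {g\<in>block_choices P p. v \<in> g S0} (\<lambda>g. S0 - g S0)"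
  let ?put_v = "\<lambda>(g, w). (g(S0 := insert v (g S0 - {w})), w)"
  let ?take_v = "\<lambda>(g, w). (g(S0 := insert w (g S0 - {v})), w)"
  have sub: "g \<in> block_choices P p \<Longrightarrow> g S0 \<subseteq> S0" for g
    using assms(1) by (auto simp: block_choices_iff)
  show ?thesis
  proof (rule sum.reindex_bij_witness[where i = ?take_v and j = ?put_v])
    show "?take_v (?put_v a) = a" if "a \<in> ?Out" for a
      using that by (auto simp: insert_absorb)
    show "?put_v (?take_v b) = b" if "b \<in> ?In" for b
      using that by (auto simp: insert_absorb)
    show "?put_v a \<in> ?In" if "a \<in> ?Out" for a
      using that assms sub by (auto intro!: block_choices_exchange)
    show "?take_v b \<in> ?Out" if "b \<in> ?In" for b
      using that assms sub by (auto intro!: block_choices_exchange)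
    show "(\<lambda>(g, w). F g) (?put_v a) = (\<lambda>(g, w). F (g(S0 := insert v (g S0 - {w})))) a" for a
      by (simp add: case_prod_unfold)
  qed
qed

lemma sum_sigma_eq_sum_exchange:
  assumes "finite P" "\<And>S. S \<in> P \<Longrightarrow> finite S" "disjoint P"
    and "S0 \<in> P" "v \<in> S0" "card S0 = p + q"
  shows "(\<Sum>g\<in>block_choices P p. sigma p q (\<Union>S\<in>P. g S) v * F g)
       = (\<Sum>(g, w)\<in>Sigma {g\<in>block_choices P p. v \<notin> g S0} (\<lambda>g. g S0).
            F (g(S0 := insert v (g S0 - {w}))) - F g)"
proof -
  define C where "C = block_choices P p"
  define In where "In = {g\<in>C. v \<in> g S0}"
  define Out where "Out = {g\<in>C. v \<notin> g S0}"
  have fin: "finite C" "finite S0"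
    using assms(1,2,4) by (auto simp: C_def intro: finite_block_choices)
  have sub: "g \<in> C \<Longrightarrow> g S0 \<subseteq> S0 \<and> card (g S0) = p" for g
    using assms(4) by (auto simp: C_def block_choices_iff)
  have "(\<Sum>g\<in>C. sigma p q (\<Union>S\<in>P. g S) v * F g)
      = (\<Sum>g\<in>C. if v \<in> g S0 then real q * F g else - (real p * F g))"
    using mem_Union_block_choices[OF assms(3-5)] by (intro sum.cong) (auto simp: C_def sigma_def)
  also have "\<dots> = (\<Sum>g\<in>In. real q * F g) - (\<Sum>g\<in>Out. real p * F g)"
    using fin by (simp add: sum.If_cases sum_negf In_def Out_def Int_def)
  also have "(\<Sum>g\<in>In. real q * F g) = (\<Sum>(g, w)\<in>Sigma In (\<lambda>g. S0 - g S0). F g)"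
  proof -
    have "card (S0 - g S0) = q" if "g \<in> In" for g
    proof -
      have "g S0 \<subseteq> S0" "card (g S0) = p" using that sub by (auto simp: In_def)
      thus ?thesis using fin(2) assms(6) by (simp add: card_Diff_subset finite_subset)
    qed
    thus ?thesis using fin by (simp add: sum.Sigma[symmetric] In_def)
  qed
  also have "(\<Sum>g\<in>Out. real p * F g) = (\<Sum>(g, w)\<in>Sigma Out (\<lambda>g. g S0). F g)"
  proof -
    have "finite (g S0)" "card (g S0) = p" if "g \<in> Out" for g
      using that sub fin(2) by (auto simp: Out_def intro: finite_subset)
    thus ?thesis using fin by (simp add: sum.Sigma[symmetric] Out_def)
  qed
  finally show ?thesis
    using sum_exchange_reindex[OF assms(4,5) fin(2), where p = p and F = F]
    by (simp add: C_def In_def Out_def case_prod_unfold sum_subtractf)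
qed

lemma sym_diff_exchange_subset:
  assumes "v \<notin> N"
  shows "sym_diff ((\<Union>S\<in>P. (g(S0 := insert v (g S0 - {w}))) S) \<inter> N) ((\<Union>S\<in>P. g S) \<inter> N)
       \<subseteq> {w} \<inter> N"
  using assms by (auto split: if_splits)

lemma lipschitz_exchange:
  assumes "lipschitz_vertex E V f K v" "v \<notin> nbrs E V v"
  shows "\<bar>f v ((\<Union>S\<in>P. (g(S0 := insert v (g S0 - {w}))) S) \<inter> nbrs E V v)
            - f v ((\<Union>S\<in>P. g S) \<inter> nbrs E V v)\<bar>
       \<le> K v / real (deg E V v) * of_bool (w \<in> nbrs E V v)"
proof -
  let ?N = "nbrs E V v"
  let ?D = "sym_diff ((\<Union>S\<in>P. (g(S0 := insert v (g S0 - {w}))) S) \<inter> ?N) ((\<Union>S\<in>P. g S) \<inter> ?N)"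
  have "card ?D \<le> card ({w} \<inter> ?N)"
    by (rule card_mono[OF _ sym_diff_exchange_subset[OF assms(2)]]) simp
  hence "real (card ?D) \<le> of_bool (w \<in> ?N)" by (cases "w \<in> ?N") auto
  moreover have "K v > 0" using assms(1) unfolding lipschitz_vertex_def by blast
  ultimately have "K v * real (card ?D) / real (deg E V v) \<le> K v / real (deg E V v) * of_bool (w \<in> ?N)"
    by (simp add: divide_right_mono mult_left_mono)
  moreover have "\<bar>f v ((\<Union>S\<in>P. (g(S0 := insert v (g S0 - {w}))) S) \<inter> ?N) - f v ((\<Union>S\<in>P. g S) \<inter> ?N)\<bar>
      \<le> K v * real (card ?D) / real (deg E V v)"
    using assms(1) unfolding lipschitz_vertex_def by blast
  ultimately show ?thesis by linarith
qed

lemma sum_card_exchange_nbrs: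
  assumes "finite P" "\<And>S. S \<in> P \<Longrightarrow> finite S" "S0 \<in> P" "v \<in> S0" "v \<notin> N"
    and "card S0 = p + q" "p > 0" "q > 0"
  shows "(\<Sum>g\<in>{g\<in>block_choices P p. v \<notin> g S0}. card (g S0 \<inter> N)) * ((p + q) * (p + q - 1))
       = card (block_choices P p) * p * q * card (S0 \<inter> N)"
proof -
  define Out where "Out = {g\<in>block_choices P p. v \<notin> g S0}"
  have fin: "finite Out" "finite (S0 \<inter> N)"
    using finite_block_choices[OF assms(1,2)] assms(2,3) by (auto simp: Out_def)
  have "(\<Sum>g\<in>Out. card (g S0 \<inter> N)) = (\<Sum>g\<in>Out. card {w\<in>S0 \<inter> N. w \<in> g S0})"
    using assms(3) by (intro sum.cong arg_cong[where f = card]) (auto simp: Out_def block_choices_iff)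
  also have "\<dots> = (\<Sum>w\<in>S0 \<inter> N. card {g\<in>Out. w \<in> g S0})"
    using sum.swap_restrict[OF fin, of "\<lambda>_ _. 1::nat" "\<lambda>g w. w \<in> g S0"] by simp
  also have "\<dots> = (\<Sum>w\<in>S0 \<inter> N. card {g\<in>block_choices P p. v \<notin> g S0 \<and> w \<in> g S0})"
    by (intro sum.cong refl arg_cong[where f = card]) (auto simp: Out_def)
  finally have "(\<Sum>g\<in>Out. card (g S0 \<inter> N)) * ((p + q) * (p + q - 1))
      = (\<Sum>w\<in>S0 \<inter> N. card {g\<in>block_choices P p. v \<notin> g S0 \<and> w \<in> g S0} * ((p + q) * (p + q - 1)))"
    by (simp add: sum_distrib_right)
  also have "\<dots> = (\<Sum>w\<in>S0 \<inter> N. card (block_choices P p) * p * q)"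
    using assms by (intro sum.cong card_block_choices_avoiding_containing) auto
  finally show ?thesis by (simp add: Out_def mult.commute)
qed


lemma abs_sum_sigma_le:
  assumes "finite P" "\<And>S. S \<in> P \<Longrightarrow> finite S" "disjoint P" "S0 \<in> P" "v \<in> S0"
    and "card S0 = p + q" "p > 0" "q > 0"
    and "lipschitz_vertex E V f K v" "v \<notin> nbrs E V v"
  shows "\<bar>\<Sum>g\<in>block_choices P p. sigma p q (\<Union>S\<in>P. g S) v * f v ((\<Union>S\<in>P. g S) \<inter> nbrs E V v)\<bar>
       \<le> K v / real (deg E V v) * real (card (S0 \<inter> nbrs E V v))
         * (real (card (block_choices P p)) * real p * real q / (real (p + q) * real (p + q - 1)))"
proof -
  let ?N = "nbrs E V v"
  let ?L = "K v / real (deg E V v)"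
  define F where "F g = f v ((\<Union>S\<in>P. g S) \<inter> ?N)" for g
  define Out where "Out = {g\<in>block_choices P p. v \<notin> g S0}"
  have "finite Out" using finite_block_choices[OF assms(1,2)] by (simp add: Out_def)
  moreover have "g \<in> Out \<Longrightarrow> finite (g S0)" for g
    using assms(2,4) by (auto simp: Out_def block_choices_iff intro: finite_subset)
  ultimately have fin: "finite Out" "\<And>g. g \<in> Out \<Longrightarrow> finite (g S0)" by blast+
  have "\<bar>\<Sum>g\<in>block_choices P p. sigma p q (\<Union>S\<in>P. g S) v * F g\<bar>
      = \<bar>\<Sum>(g, w)\<in>Sigma Out (\<lambda>g. g S0). F (g(S0 := insert v (g S0 - {w}))) - F g\<bar>"
    unfolding Out_def by (simp only: sum_sigma_eq_sum_exchange[OF assms(1-6)])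
  also have "\<dots> \<le> (\<Sum>(g, w)\<in>Sigma Out (\<lambda>g. g S0). \<bar>F (g(S0 := insert v (g S0 - {w}))) - F g\<bar>)"
    by (rule order_trans[OF sum_abs]) (simp add: case_prod_unfold)
  also have "\<dots> \<le> (\<Sum>(g, w)\<in>Sigma Out (\<lambda>g. g S0). ?L * of_bool (w \<in> ?N))"
    by (intro sum_mono) (clarify, unfold F_def, rule lipschitz_exchange[OF assms(9,10)])
  also have "\<dots> = (\<Sum>g\<in>Out. \<Sum>w\<in>g S0. ?L * of_bool (w \<in> ?N))"
    using fin by (intro sum.Sigma[symmetric]) auto
  also have "\<dots> = (\<Sum>g\<in>Out. ?L * real (card (g S0 \<inter> ?N)))"
    using fin by (intro sum.cong refl) (simp flip: sum_divide_distrib sum_distrib_left)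
  also have "\<dots> = ?L * real (\<Sum>g\<in>Out. card (g S0 \<inter> ?N))"
    by (simp add: sum_distrib_left)
  also have "real (\<Sum>g\<in>Out. card (g S0 \<inter> ?N))
      = real (card (block_choices P p) * p * q * card (S0 \<inter> ?N)) / (real (p + q) * real (p + q - 1))"
  proof -
    have "real (\<Sum>g\<in>Out. card (g S0 \<inter> ?N)) * (real (p + q) * real (p + q - 1))
        = real (card (block_choices P p) * p * q * card (S0 \<inter> ?N))"
      using arg_cong[OF sum_card_exchange_nbrs[OF assms(1,2,4,5,10,6-8)], of real]
      by (simp only: Out_def of_nat_mult)
    thus ?thesis using assms(7,8) by (simp add: eq_divide_eq)
  qed
  finally show ?thesis unfolding F_def by (simp add: mult_ac)
qed

lemma abs_cond_exp_B_le:
  assumes "simple_graph_no_isolated E V" "\<forall>v\<in>V. lipschitz_vertex E V f K v"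
    and "is_partition V P" "\<forall>S\<in>P. card S = p + q" "p > 0" "q > 0" "n > 0"
  shows "\<bar>cond_exp_B E V f p q n P\<bar>
       \<le> (\<Sum>v\<in>V. K v / real (deg E V v) * real (card (block_of P v \<inter> nbrs E V v)))
           / (real n * real (p + q) * real (p + q - 1))"
proof -
  let ?T = "\<lambda>g. \<Union>S\<in>P. g S"
  let ?C = "block_choices P p"
  let ?W = "\<Sum>v\<in>V. K v / real (deg E V v) * real (card (block_of P v \<inter> nbrs E V v))"
  let ?a = "real (card ?C) * real p * real q / (real (p + q) * real (p + q - 1))"
  have finV: "finite V" using assms(1) by (simp add: simple_graph_no_isolated_def)
  note finP = is_partition_finite[OF assms(3) finV]
  have disj: "disjoint P" using assms(3) by (simp add: is_partition_def)
  have C_pos: "card ?C > 0"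
    using assms(4) by (simp add: card_block_choices[OF finP] prod_pos)
  have per_vertex: "\<bar>\<Sum>g\<in>?C. sigma p q (?T g) v * f v (?T g \<inter> nbrs E V v)\<bar>
      \<le> K v / real (deg E V v) * real (card (block_of P v \<inter> nbrs E V v)) * ?a" if "v \<in> V" for v
    using block_of_mem[OF assms(3) that] assms nbrs_not_self[OF assms(1) that] that
    by (intro abs_sum_sigma_le[OF finP disj]) auto
  have "\<bar>\<Sum>g\<in>?C. xi E V f p q n (?T g)\<bar>
      = 1 / (real p * real q * real n) * \<bar>\<Sum>v\<in>V. \<Sum>g\<in>?C. sigma p q (?T g) v * f v (?T g \<inter> nbrs E V v)\<bar>"
    unfolding xi_def sum_distrib_left[symmetric] abs_mult sum.swap[of _ ?C V] by simp
  also have "\<dots> \<le> 1 / (real p * real q * real n)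
      * (\<Sum>v\<in>V. K v / real (deg E V v) * real (card (block_of P v \<inter> nbrs E V v)) * ?a)"
    by (intro mult_left_mono order_trans[OF sum_abs sum_mono] per_vertex) auto
  also have "\<dots> = real (card ?C) * (?W / (real n * real (p + q) * real (p + q - 1)))"
  proof -
    have "1 / (real p * real q * real n) * (w * ?a)
        = real (card ?C) * (w / (real n * real (p + q) * real (p + q - 1)))" for w
      using assms(5-7) by (simp add: field_simps)
    thus ?thesis by (simp only: sum_distrib_right[symmetric])
  qed
  finally show ?thesis
    using C_pos unfolding cond_exp_B_def by (simp add: field_simps)
qed

definition transpose_blocks :: "'a \<Rightarrow> 'a \<Rightarrow> 'a set set \<Rightarrow> 'a set set" where
  "transpose_blocks u u' P = (\<lambda>S. Transposition.transpose u u' ` S) ` P"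

lemma transpose_blocks_involutory [simp]:
  "transpose_blocks u u' (transpose_blocks u u' P) = P"
  unfolding transpose_blocks_def by (simp add: image_comp)

lemma transpose_blocks_commute:
  "transpose_blocks u' u = transpose_blocks u u'"
  unfolding transpose_blocks_def by (simp add: transpose_commute)

lemma transpose_blocks_restricted_partitions:
  assumes "is_partition V Parts" "A \<in> Parts" "u \<in> A" "u' \<in> A"
    and "P \<in> restricted_partitions V Parts r n"
  shows "transpose_blocks u u' P \<in> restricted_partitions V Parts r n"
proof -
  let ?t = "Transposition.transpose u u'"
  have P: "is_partition V P" "card P = n" "\<forall>S\<in>P. card S = r \<and> (\<exists>A\<in>Parts. S \<subseteq> A)"
    using assms(5) unfolding restricted_partitions_def by auto
  have Parts_disj: "A' \<in> Parts \<Longrightarrow> x \<in> A' \<Longrightarrow> x \<in> A \<Longrightarrow> A' = A" for A' x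
    using assms(1,2) unfolding is_partition_def by (auto dest: disjointD)
  have "u \<in> V" "u' \<in> V" using assms(1-4) unfolding is_partition_def by auto
  hence "\<Union>(transpose_blocks u u' P) = V"
    using P(1) unfolding transpose_blocks_def is_partition_def by (simp flip: image_Union)
  moreover have "{} \<notin> transpose_blocks u u' P"
    using P(1) unfolding transpose_blocks_def is_partition_def by auto
  moreover have "disjoint (transpose_blocks u u' P)"
    using P(1) unfolding transpose_blocks_def is_partition_def
    by (auto intro: disjoint_image inj_on_subset[OF inj_transpose])
  moreover have "inj_on ((`) ?t) P"
    by (rule inj_on_inverseI[where g = "(`) ?t"]) (simp add: image_comp)
  hence "card (transpose_blocks u u' P) = n"
    using P(2) by (simp add: transpose_blocks_def card_image)
  moreover have "card (?t ` S) = r \<and> (\<exists>A'\<in>Parts. ?t ` S \<subseteq> A')" if S: "S \<in> P" for S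
  proof -
    obtain A' where A': "A' \<in> Parts" "S \<subseteq> A'" using P(3) S by auto
    have "?t ` S \<subseteq> A'"
    proof (cases "u \<in> S \<or> u' \<in> S")
      case True
      hence "A' = A" using A' assms(3,4) Parts_disj by blast
      thus ?thesis using A'(2) assms(3,4) by (auto simp: transpose_def)
    next
      case False
      thus ?thesis using A'(2) by (simp add: transpose_image_eq)
    qed
    moreover have "card (?t ` S) = r"
      using P(3) S by (simp add: card_image inj_on_subset[OF inj_transpose])
    ultimately show ?thesis using A'(1) by blast
  qed
  ultimately show ?thesis
    unfolding restricted_partitions_def is_partition_def transpose_blocks_def by auto
qed

lemma mem_block_of_transpose_blocks:
  assumes "u \<in> block_of P v" "v \<noteq> u" "v \<noteq> u'"
  shows "u' \<in> block_of (transpose_blocks u u' P) v"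
proof -
  obtain S where "S \<in> P" "v \<in> S" "u \<in> S" using assms(1) unfolding block_of_def by auto
  hence "Transposition.transpose u u' ` S \<in> transpose_blocks u u' P"
    "v \<in> Transposition.transpose u u' ` S" "u' \<in> Transposition.transpose u u' ` S"
    using assms(2,3) by (auto simp: transpose_blocks_def in_transpose_image_iff)
  thus ?thesis unfolding block_of_def by auto
qed

lemma finite_restricted_partitions:
  "finite V \<Longrightarrow> finite (restricted_partitions V Parts r n)"
  unfolding restricted_partitions_def is_partition_def
  by (rule finite_subset[of _ "Pow (Pow V)"]) auto


lemma card_restricted_partitions_mem_block_of_eq:
  assumes "is_partition V Parts" "finite V" "A \<in> Parts" "u \<in> A" "u' \<in> A" "v \<noteq> u" "v \<noteq> u'"
  shows "card {P\<in>restricted_partitions V Parts r n. u \<in> block_of P v}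
       = card {P\<in>restricted_partitions V Parts r n. u' \<in> block_of P v}"
proof -
  let ?X = "\<lambda>u. {P\<in>restricted_partitions V Parts r n. u \<in> block_of P v}"
  have "transpose_blocks u u' ` ?X u \<subseteq> ?X u'"
    using transpose_blocks_restricted_partitions[OF assms(1,3-5)] mem_block_of_transpose_blocks
      assms(6,7) by auto
  moreover have "transpose_blocks u' u ` ?X u' \<subseteq> ?X u"
    using transpose_blocks_restricted_partitions[OF assms(1,3,5,4)] mem_block_of_transpose_blocks
      assms(6,7) by auto
  hence "transpose_blocks u u' ` ?X u' \<subseteq> ?X u"
    unfolding transpose_blocks_commute[where u = u and u' = u'] .
  hence "transpose_blocks u u' ` transpose_blocks u u' ` ?X u' \<subseteq> transpose_blocks u u' ` ?X u"
    by (rule image_mono)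
  hence "?X u' \<subseteq> transpose_blocks u u' ` ?X u" by (simp add: image_comp comp_def)
  ultimately have "transpose_blocks u u' ` ?X u = ?X u'" by blast
  moreover have "inj_on (transpose_blocks u u') (?X u)"
    by (rule inj_on_inverseI[where g = "transpose_blocks u u'"]) simp
  ultimately show ?thesis by (simp add: card_image flip: \<open>transpose_blocks u u' ` ?X u = ?X u'\<close>)
qed

lemma block_of_restricted_partition:
  assumes "is_partition V Parts" "A \<in> Parts" "v \<in> A" "P \<in> restricted_partitions V Parts r n"
  shows "block_of P v \<subseteq> A" "v \<in> block_of P v" "card (block_of P v) = r"
proof -
  have P: "is_partition V P" "\<forall>S\<in>P. card S = r \<and> (\<exists>A\<in>Parts. S \<subseteq> A)"
    using assms(4) unfolding restricted_partitions_def by auto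
  have "v \<in> V" using assms(1-3) unfolding is_partition_def by auto
  note block = block_of_mem[OF P(1) this]
  then obtain A' where "A' \<in> Parts" "block_of P v \<subseteq> A'" using P(2) by blast
  moreover from this have "A' = A"
    using assms(1-3) block(2) unfolding is_partition_def by (auto dest: disjointD)
  ultimately show "block_of P v \<subseteq> A" by simp
  show "v \<in> block_of P v" "card (block_of P v) = r" using block P(2) by auto
qed

lemma sum_card_restricted_partitions_mem_block_of:
  assumes "is_partition V Parts" "finite V" "A \<in> Parts" "v \<in> A"
  shows "(\<Sum>u\<in>A - {v}. card {P\<in>restricted_partitions V Parts r n. u \<in> block_of P v})
       = card (restricted_partitions V Parts r n) * (r - 1)"
proof -
  let ?RP = "restricted_partitions V Parts r n"
  have finA: "finite A" using assms(1-3) unfolding is_partition_def by (auto intro: finite_subset)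
  have "(\<Sum>u\<in>A - {v}. card {P\<in>?RP. u \<in> block_of P v})
      = (\<Sum>P\<in>?RP. card {u\<in>A - {v}. u \<in> block_of P v})"
    using sum.swap_restrict[OF finite_restricted_partitions[OF assms(2)], of "A - {v}"
        "\<lambda>_ _. 1::nat" "\<lambda>P u. u \<in> block_of P v"] finA
    by simp
  also have "\<dots> = (\<Sum>P\<in>?RP. r - 1)"
  proof (intro sum.cong refl)
    fix P assume P: "P \<in> ?RP"
    note block = block_of_restricted_partition[OF assms(1,3,4) P]
    hence "{u\<in>A - {v}. u \<in> block_of P v} = block_of P v - {v}" by auto
    thus "card {u\<in>A - {v}. u \<in> block_of P v} = r - 1"
      using block finA by (simp add: finite_subset)
  qed
  finally show ?thesis by simp
qed

lemma card_restricted_partitions_mem_block_of: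
  assumes "is_partition V Parts" "finite V" "A \<in> Parts" "v \<in> A" "u \<in> A" "u \<noteq> v"
  shows "card {P\<in>restricted_partitions V Parts r n. u \<in> block_of P v} * (card A - 1)
       = card (restricted_partitions V Parts r n) * (r - 1)"
proof -
  let ?c = "\<lambda>u. card {P\<in>restricted_partitions V Parts r n. u \<in> block_of P v}"
  have finA: "finite A" using assms(1-3) unfolding is_partition_def by (auto intro: finite_subset)
  have "?c u' = ?c u" if "u' \<in> A - {v}" for u'
    using that assms(5,6) by (intro card_restricted_partitions_mem_block_of_eq[OF assms(1-3)]) auto
  hence "(\<Sum>u'\<in>A - {v}. ?c u') = (\<Sum>u'\<in>A - {v}. ?c u)" by (rule sum.cong[OF refl])
  thus ?thesis
    using sum_card_restricted_partitions_mem_block_of[OF assms(1-4)] assms(4) finA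
    by (simp add: mult.commute)
qed


lemma sum_card_block_of_inter_le:
  assumes "is_partition V Parts" "finite V" "A \<in> Parts" "v \<in> A" "finite N" "v \<notin> N"
  shows "real (\<Sum>P\<in>restricted_partitions V Parts r n. card (block_of P v \<inter> N))
       \<le> real (card N) * (real (card (restricted_partitions V Parts r n)) * real (r - 1)
            / real (card A - 1))"
proof -
  let ?RP = "restricted_partitions V Parts r n"
  let ?c = "real (card ?RP) * real (r - 1) / real (card A - 1)"
  have finA: "finite A" using assms(1-3) unfolding is_partition_def by (auto intro: finite_subset)
  have "(\<Sum>P\<in>?RP. card (block_of P v \<inter> N)) = (\<Sum>P\<in>?RP. card {u\<in>N. u \<in> block_of P v})"
    by (intro sum.cong refl arg_cong[where f = card]) auto
  also have "\<dots> = (\<Sum>u\<in>N. card {P\<in>?RP. u \<in> block_of P v})"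
    using sum.swap_restrict[OF finite_restricted_partitions[OF assms(2)] assms(5),
        of "\<lambda>_ _. 1::nat" "\<lambda>P u. u \<in> block_of P v"]
    by simp
  finally have "real (\<Sum>P\<in>?RP. card (block_of P v \<inter> N))
      = (\<Sum>u\<in>N. real (card {P\<in>?RP. u \<in> block_of P v}))" by simp
  also have "\<dots> \<le> (\<Sum>u\<in>N. ?c)"
  proof (intro sum_mono)
    fix u assume "u \<in> N"
    show "real (card {P\<in>?RP. u \<in> block_of P v}) \<le> ?c"
    proof (cases "u \<in> A")
      case True
      have "u \<noteq> v" using \<open>u \<in> N\<close> assms(6) by blast
      hence "card {u, v} \<le> card A" using True assms(4) finA by (intro card_mono) auto
      hence "card A - 1 > 0" using \<open>u \<noteq> v\<close> by simp
      moreover have "real (card {P\<in>?RP. u \<in> block_of P v}) * real (card A - 1)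
          = real (card ?RP) * real (r - 1)"
        using arg_cong[OF card_restricted_partitions_mem_block_of[OF assms(1-4) True \<open>u \<noteq> v\<close>], of real]
        by (simp only: of_nat_mult)
      ultimately show ?thesis by (simp add: le_divide_eq)
    next
      case False
      hence "{P\<in>?RP. u \<in> block_of P v} = {}"
        using block_of_restricted_partition(1)[OF assms(1,3,4)] by blast
      thus ?thesis by (simp only: card.empty of_nat_0) simp
    qed
  qed
  finally show ?thesis by simp
qed

lemma sum_card_block_of_nbrs_le:
  assumes "simple_graph_no_isolated E V" "is_partition V Parts" "v \<in> V"
  shows "(\<Sum>P\<in>restricted_partitions V Parts r n. real (card (block_of P v \<inter> nbrs E V v)))
       \<le> real (deg E V v) * (real (card (restricted_partitions V Parts r n)) * real (r - 1)
            / real (card (block_of Parts v) - 1))"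
proof -
  have "finite V" using assms(1) by (simp add: simple_graph_no_isolated_def)
  moreover from this have "finite (nbrs E V v)" by (simp add: nbrs_def)
  ultimately show ?thesis
    using sum_card_block_of_inter_le[OF assms(2) _ block_of_mem[OF assms(2,3)] _
        nbrs_not_self[OF assms(1,3)]]
    by (simp add: deg_def)
qed

lemma sum_abs_cond_exp_B_le:
  assumes "simple_graph_no_isolated E V" "\<forall>v\<in>V. lipschitz_vertex E V f K v"
    and "is_partition V Parts" "p > 0" "q > 0" "n > 0" "r = p + q"
  shows "(\<Sum>P\<in>restricted_partitions V Parts r n. \<bar>cond_exp_B E V f p q n P\<bar>)
       \<le> real (card (restricted_partitions V Parts r n)) / (real n * real r)
           * (\<Sum>v\<in>V. K v / real (card (block_of Parts v) - 1))"
proof -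
  let ?RP = "restricted_partitions V Parts r n"
  let ?D = "real n * real r * real (r - 1)"
  let ?d = "\<lambda>v. real (deg E V v)"
  let ?X = "\<lambda>P v. real (card (block_of P v \<inter> nbrs E V v))"
  let ?c = "\<lambda>v. real (card ?RP) * real (r - 1) / real (card (block_of Parts v) - 1)"
  have "(\<Sum>P\<in>?RP. \<bar>cond_exp_B E V f p q n P\<bar>) \<le> (\<Sum>P\<in>?RP. (\<Sum>v\<in>V. K v / ?d v * ?X P v) / ?D)"
  proof (intro sum_mono)
    fix P assume "P \<in> ?RP"
    hence "is_partition V P" "\<forall>S\<in>P. card S = p + q"
      using assms(7) unfolding restricted_partitions_def by auto
    from abs_cond_exp_B_le[OF assms(1,2) this assms(4-6)]
    show "\<bar>cond_exp_B E V f p q n P\<bar> \<le> (\<Sum>v\<in>V. K v / ?d v * ?X P v) / ?D"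
      using assms(7) by (simp add: mult.assoc)
  qed
  also have "\<dots> = (\<Sum>v\<in>V. K v / ?d v * (\<Sum>P\<in>?RP. ?X P v)) / ?D"
    by (simp only: sum_divide_distrib[symmetric] sum_distrib_left sum.swap[of _ ?RP V])
  also have "\<dots> \<le> (\<Sum>v\<in>V. K v * ?c v) / ?D"
  proof (intro divide_right_mono sum_mono)
    fix v assume v: "v \<in> V"
    have "K v > 0" using assms(2) v by (simp add: lipschitz_vertex_def)
    hence "K v / ?d v * (\<Sum>P\<in>?RP. ?X P v) \<le> K v / ?d v * (?d v * ?c v)"
      using sum_card_block_of_nbrs_le[OF assms(1,3) v] by (intro mult_left_mono) simp_all
    thus "K v / ?d v * (\<Sum>P\<in>?RP. ?X P v) \<le> K v * ?c v"
      using deg_pos[OF assms(1) v] by simp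
  qed simp
  also have "\<dots> = real (card ?RP) / (real n * real r) * (\<Sum>v\<in>V. K v / real (card (block_of Parts v) - 1))"
  proof -
    have cancel: "k * (R * m / a) / (x * m) = R / x * (k / a)" if "m > 0" for k R m a x :: real
      using that by (cases "a = 0") (simp_all add: field_simps)
    have "real (r - 1) > 0" using assms(4,5,7) by simp
    thus ?thesis by (simp add: cancel sum_divide_distrib sum_distrib_left mult_ac)
  qed
  finally show ?thesis .
qed

lemma sum_div_card_block_of_le:
  assumes "is_partition V Parts" "finite V" "\<forall>A\<in>Parts. 2 \<le> card A" "\<forall>v\<in>V. 0 \<le> K v"
  shows "(\<Sum>v\<in>V. K v / real (card (block_of Parts v) - 1)) \<le> 2 * Max (K ` V) * real (card Parts)"
proof -
  have V: "V = \<Union>Parts" and disj: "disjoint Parts" using assms(1) by (auto simp: is_partition_def)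
  have finParts: "finite A" if "A \<in> Parts" for A
    using is_partition_finite[OF assms(1,2)] that by blast
  have "(\<Sum>v\<in>V. K v / real (card (block_of Parts v) - 1))
      = (\<Sum>A\<in>Parts. \<Sum>v\<in>A. K v / real (card (block_of Parts v) - 1))"
    unfolding V using finParts disj
    by (simp add: sum.Union_disjoint[where C = Parts] disjointD)
  also have "\<dots> = (\<Sum>A\<in>Parts. \<Sum>v\<in>A. K v / real (card A - 1))"
    using disj by (intro sum.cong refl) (simp add: block_of_eq)
  also have "\<dots> \<le> (\<Sum>A\<in>Parts. 2 * Max (K ` V))"
  proof (intro sum_mono)
    fix A assume A: "A \<in> Parts"
    have AV: "A \<subseteq> V" using A V by blast
    have K_le: "K v \<le> Max (K ` V)" if "v \<in> A" for v
      using that AV by (intro Max_ge finite_imageI assms(2) imageI) blast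
    have "card A \<ge> 2" using assms(3) A by blast
    then obtain v where "v \<in> A" by fastforce
    hence "0 \<le> Max (K ` V)" using K_le assms(4) AV by force
    have "(\<Sum>v\<in>A. K v / real (card A - 1)) \<le> (\<Sum>v\<in>A. Max (K ` V) / real (card A - 1))"
      using K_le by (intro sum_mono divide_right_mono) auto
    also have "\<dots> = real (card A) / real (card A - 1) * Max (K ` V)" by simp
    also have "\<dots> \<le> 2 * Max (K ` V)"
      using \<open>card A \<ge> 2\<close> \<open>0 \<le> Max (K ` V)\<close> by (intro mult_right_mono) (auto simp: divide_le_eq)
    finally show "(\<Sum>v\<in>A. K v / real (card A - 1)) \<le> 2 * Max (K ` V)" .
  qed
  finally show ?thesis by (simp add: mult.commute)
qed

lemma two_le_card_part:
  assumes "is_partition V Parts" "finite V" "A \<in> Parts" "r dvd card A" "2 \<le> r"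
  shows "2 \<le> card A"
proof -
  have "card A > 0" using is_partition_finite[OF assms(1,2)] assms(1,3)
    by (auto simp: is_partition_def card_gt_0_iff)
  with assms(4,5) show ?thesis by (meson dvd_imp_le order_trans)
qed

theorem mainTheorem16:
  fixes E :: "'a \<Rightarrow> 'a \<Rightarrow> bool" and V :: "'a set" and f :: "'a \<Rightarrow> 'a set \<Rightarrow> real"
    and K :: "'a \<Rightarrow> real" and n p q r :: nat and Parts :: "'a set set"
  assumes "n > 0" "p > 0" "q > 0" "r = p + q"
    and "simple_graph_no_isolated E V"
    and "card V = r * n"
    and "\<forall>v\<in>V. f v {} = 0"
    and "\<forall>v\<in>V. lipschitz_vertex E V f K v"
    and "is_partition V Parts" "\<forall>A\<in>Parts. r dvd card A"
  shows "(\<Sum>P\<in>restricted_partitions V Parts r n. \<bar>cond_exp_B E V f p q n P\<bar>)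
            / real (card (restricted_partitions V Parts r n))
         \<le> 2 * Max (K ` V) * real (card Parts) / (real r * real n)"
proof -
  let ?RP = "restricted_partitions V Parts r n"
  let ?S = "\<Sum>v\<in>V. K v / real (card (block_of Parts v) - 1)"
  have finV: "finite V" using assms(5) by (simp add: simple_graph_no_isolated_def)
  have K_nonneg: "\<forall>v\<in>V. 0 \<le> K v" using assms(8) by (auto simp: lipschitz_vertex_def less_imp_le)
  have "\<forall>A\<in>Parts. 2 \<le> card A"
    using assms(2-4,10) by (auto intro: two_le_card_part[OF assms(9) finV, of _ r])
  note sum_S = sum_div_card_block_of_le[OF assms(9) finV this K_nonneg]
  have "0 \<le> ?S" using K_nonneg by (auto intro: sum_nonneg)
  have "(\<Sum>P\<in>?RP. \<bar>cond_exp_B E V f p q n P\<bar>) / real (card ?RP) \<le> ?S / (real n * real r)"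
    using sum_abs_cond_exp_B_le[OF assms(5,8,9,2,3,1,4)] \<open>0 \<le> ?S\<close>
    by (cases "card ?RP = 0") (simp_all add: divide_le_eq field_simps)
  also have "\<dots> \<le> 2 * Max (K ` V) * real (card Parts) / (real r * real n)"
    using sum_S assms(1-4) by (simp add: divide_right_mono mult.commute)
  finally show ?thesis .
qed

end
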